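(* For all $n\in\mathbb{N}$ with $n\geq 2$, $$\iota(2^n-1)\leq \frac{3}{2}n-\left\lfloor \frac{n-2}{2^{\lfloor \frac{\log n}{\log 2}-1\rfloor+1}}\right\rfloor-\left\lfloor \frac{\log n}{\log 2}-1\right\rfloor+\frac{1}{4}\left(1-(-1)^n\right)+\iota(n).$$
   Context: An addition chain producing $N$ is a sequence $1,2,s_3,\ldots,s_k=N$ in which every term after the first is the sum of two (not necessarily distinct) earlier terms; its length is the number of terms excluding the initial $1$. $\iota(N)$ denotes the length of the shortest addition chain producing $N$. $\lfloor\cdot\rfloor$ is the floor function and $\log$ the natural logarithm. *)

theory Defs
  imports Complex_Main
begin

definition addition_chain :: "nat list \<Rightarrow> bool" where
  "addition_chain c \<longleftrightarrow> c \<noteq> [] \<and> c ! 0 = 1 \<and>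
     (\<forall>i. 0 < i \<and> i < length c \<longrightarrow> (\<exists>j k. j < i \<and> k < i \<and> c ! i = c ! j + c ! k))"

definition chain_length :: "nat list \<Rightarrow> nat" where
  "chain_length c = length c - 1"

definition iota :: "nat \<Rightarrow> nat" where
  "iota N = (LEAST l. \<exists>c. addition_chain c \<and> last c = N \<and> chain_length c = l)"

end

theory Submission
  imports Defs
begin

text \<open>Doubling twice and adding 3 takes 2^m - 1 to 2^(m+2) - 1 in three steps, and doubling
and adding 1 takes it to 2^(m+1) - 1 in two; starting from the chain 1, 2, 3 this gives
\<open>2 \<iota>(2^n - 1) \<le> 3n - 2 + n mod 2\<close>.  On the other side, the i-th entry of an addition
chain is at most 2^i, so \<open>\<lfloor>log\<^sub>2 n\<rfloor> \<le> \<iota>(n)\<close>, while \<open>(n - 2) / 2^\<lfloor>log\<^sub>2 n\<rfloor> < 2\<close>; hence the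
right-hand side of the theorem is at least \<open>3n/2 + (n mod 2)/2\<close>.\<close>

lemma addition_chain_singleton: "addition_chain [1]"
  by (auto simp: addition_chain_def)

lemma addition_chain_snoc:
  assumes "addition_chain c" "x \<in> set c" "y \<in> set c"
  shows "addition_chain (c @ [x + y])"
proof -
  obtain j k where jk: "j < length c" "c ! j = x" "k < length c" "c ! k = y"
    using assms(2,3) by (auto simp: in_set_conv_nth)
  have "\<exists>j k. j < i \<and> k < i \<and> (c @ [x + y]) ! i = (c @ [x + y]) ! j + (c @ [x + y]) ! k"
    if i: "0 < i" "i < length (c @ [x + y])" for i
  proof (cases "i < length c")
    case True
    then obtain j' k' where "j' < i" "k' < i" "c ! i = c ! j' + c ! k'"
      using assms(1) i unfolding addition_chain_def by blast
    with True show ?thesis by (intro exI[of _ j'] exI[of _ k']) (auto simp: nth_append)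
  next
    case False
    with i have "i = length c" by simp
    with jk show ?thesis by (intro exI[of _ j] exI[of _ k]) (auto simp: nth_append)
  qed
  with assms(1) show ?thesis by (auto simp: addition_chain_def nth_append)
qed

lemma addition_chain_nonempty: "addition_chain c \<Longrightarrow> c \<noteq> []"
  by (simp add: addition_chain_def)

lemma chain_length_append: "c \<noteq> [] \<Longrightarrow> chain_length (c @ d) = chain_length c + length d"
  by (cases c) (simp_all add: chain_length_def)

lemma addition_chain_one_mem: "addition_chain c \<Longrightarrow> 1 \<in> set c"
  unfolding addition_chain_def by (metis length_greater_0_conv nth_mem)

lemma addition_chain_last_mem: "addition_chain c \<Longrightarrow> last c \<in> set c"
  unfolding addition_chain_def by simp

lemma addition_chain_nth_le_power:
  assumes "addition_chain c" "i < length c"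
  shows "c ! i \<le> 2 ^ i"
  using assms(2)
proof (induction i rule: less_induct)
  case (less i)
  show ?case
  proof (cases "i = 0")
    case True
    with assms(1) show ?thesis by (simp add: addition_chain_def)
  next
    case False
    with assms(1) less.prems obtain j k where jk: "j < i" "k < i" "c ! i = c ! j + c ! k"
      unfolding addition_chain_def by blast
    have "c ! j \<le> 2 ^ j" "c ! k \<le> 2 ^ k"
      using less.IH less.prems jk by simp_all
    moreover have "(2::nat) ^ j \<le> 2 ^ (i - 1)" "(2::nat) ^ k \<le> 2 ^ (i - 1)"
      using jk by (simp_all add: power_increasing)
    moreover have "(2::nat) ^ i = 2 * 2 ^ (i - 1)"
      using False by (simp add: power_eq_if)
    ultimately show ?thesis using jk(3) by linarith
  qed
qed

lemma addition_chain_upt: "addition_chain [1..<N + 2]"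
proof (induction N)
  case 0
  show ?case using addition_chain_singleton by simp
next
  case (Suc N)
  have "N + 1 \<in> set [1..<N + 2]" "1 \<in> set [1..<N + 2]" by auto
  from addition_chain_snoc[OF Suc this] show ?case by simp
qed

lemma iota_le_chain_length:
  assumes "addition_chain c" "last c = N"
  shows "iota N \<le> chain_length c"
  unfolding iota_def using assms by (intro Least_le) blast

lemma iota_attained:
  assumes "N \<ge> 1"
  obtains c where "addition_chain c" "last c = N" "chain_length c = iota N"
proof -
  have "last [1..<(N - 1) + 2] = N" using assms by simp
  with addition_chain_upt
  have "\<exists>l c. addition_chain c \<and> last c = N \<and> chain_length c = l" by blast
  from LeastI_ex[OF this] show ?thesis
    using that by (auto simp: iota_def)
qed

lemma le_two_power_iota:
  assumes "N \<ge> 1"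
  shows "N \<le> 2 ^ iota N"
proof -
  obtain c where c: "addition_chain c" "last c = N" "chain_length c = iota N"
    using iota_attained[OF assms] .
  note nonempty = addition_chain_nonempty[OF c(1)]
  then have "length c > 0" by simp
  with c(3) have index: "length c - 1 = iota N" "iota N < length c"
    unfolding chain_length_def by arith+
  have "N = c ! iota N"
    using c(2) last_conv_nth[OF nonempty] index(1) by simp
  also have "\<dots> \<le> 2 ^ iota N"
    using addition_chain_nth_le_power[OF c(1) index(2)] .
  finally show ?thesis .
qed

lemma floor_log2_le_iota:
  assumes "N \<ge> 1"
  shows "\<lfloor>log 2 (real N)\<rfloor> \<le> int (iota N)"
proof -
  have "real N \<le> 2 ^ iota N"
    using le_two_power_iota[OF assms] by (metis of_nat_le_iff of_nat_numeral of_nat_power)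
  then have "log 2 (real N) \<le> real (iota N)"
    using assms by (simp add: log_le_iff powr_realpow)
  then show ?thesis by linarith
qed

lemma double_mersenne_add_one: "2 * (2 ^ m - 1) + 1 = (2::nat) ^ (m + 1) - 1"
  by (induction m) auto

lemma quadruple_mersenne_add_three: "4 * (2 ^ m - 1) + 3 = (2::nat) ^ (m + 2) - 1"
  by (induction m) auto

lemma mersenne_chain_double_add_one:
  assumes "addition_chain c" "last c = 2 ^ m - 1"
  obtains c' where "addition_chain c'" "last c' = 2 ^ (m + 1) - 1"
    "chain_length c' = chain_length c + 2"
proof
  define x where "x = last c"
  have "addition_chain (c @ [2 * x])"
    using addition_chain_snoc[OF assms(1), of x x] addition_chain_last_mem[OF assms(1)]
    by (simp add: x_def mult_2)
  then show "addition_chain (c @ [2 * x, 2 * x + 1])"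
    using addition_chain_snoc[of "c @ [2 * x]" "2 * x" 1] addition_chain_one_mem[OF assms(1)]
    by simp
  show "last (c @ [2 * x, 2 * x + 1]) = 2 ^ (m + 1) - 1"
    using double_mersenne_add_one[of m] by (simp add: x_def assms(2))
qed (simp add: chain_length_append addition_chain_nonempty[OF assms(1)])

lemma mersenne_chain_quadruple_add_three:
  assumes "addition_chain c" "last c = 2 ^ m - 1" "3 \<in> set c"
  obtains c' where "addition_chain c'" "last c' = 2 ^ (m + 2) - 1" "3 \<in> set c'"
    "chain_length c' = chain_length c + 3"
proof
  define x where "x = last c"
  have "addition_chain (c @ [2 * x])"
    using addition_chain_snoc[OF assms(1), of x x] addition_chain_last_mem[OF assms(1)]
    by (simp add: x_def mult_2)
  then have "addition_chain (c @ [2 * x, 4 * x])"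
    using addition_chain_snoc[of "c @ [2 * x]" "2 * x" "2 * x"] by simp
  then show "addition_chain (c @ [2 * x, 4 * x, 4 * x + 3])"
    using addition_chain_snoc[of "c @ [2 * x, 4 * x]" "4 * x" 3] assms(3) by simp
  show "last (c @ [2 * x, 4 * x, 4 * x + 3]) = 2 ^ (m + 2) - 1"
    using quadruple_mersenne_add_three[of m] by (simp add: x_def assms(2))
qed (use assms(3) in \<open>simp_all add: chain_length_append addition_chain_nonempty[OF assms(1)]\<close>)

lemma mersenne_chain_even:
  "\<exists>c. addition_chain c \<and> last c = 2 ^ (2 * j + 2) - 1 \<and> 3 \<in> set c
     \<and> chain_length c = 3 * j + 2"
proof (induction j)
  case 0
  have "addition_chain [1, 2]"
    using addition_chain_snoc[OF addition_chain_singleton, of 1 1]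
    by (simp add: numeral_2_eq_2)
  then have "addition_chain [1, 2, 3]"
    using addition_chain_snoc[of "[1, 2]" 2 1] by simp
  then show ?case by (intro exI[of _ "[1, 2, 3]"]) (simp add: chain_length_def)
next
  case (Suc j)
  then obtain c where c: "addition_chain c" "last c = 2 ^ (2 * j + 2) - 1" "3 \<in> set c"
    "chain_length c = 3 * j + 2" by blast
  obtain c' where "addition_chain c'" "last c' = 2 ^ (2 * j + 2 + 2) - 1" "3 \<in> set c'"
    "chain_length c' = chain_length c + 3"
    using mersenne_chain_quadruple_add_three[OF c(1-3)] .
  with c(4) show ?case by (intro exI[of _ c']) simp
qed

lemma iota_mersenne_le:
  assumes "n \<ge> 2"
  shows "2 * iota (2 ^ n - 1) \<le> 3 * n - 2 + n mod 2"
proof (cases "even n")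
  case True
  with assms obtain j where j: "n = 2 * j + 2" by (intro that[of "n div 2 - 1"]) auto
  obtain c where "addition_chain c" "last c = 2 ^ n - 1" "chain_length c = 3 * j + 2"
    using mersenne_chain_even j by blast
  from iota_le_chain_length[OF this(1,2)] this(3)
  have "iota (2 ^ n - 1) \<le> 3 * j + 2" by simp
  with j show ?thesis by simp
next
  case False
  with assms obtain j where j: "n = 2 * j + 2 + 1"
    by (intro that[of "n div 2 - 1"]) presburger
  obtain c where c: "addition_chain c" "last c = 2 ^ (2 * j + 2) - 1"
    "chain_length c = 3 * j + 2"
    using mersenne_chain_even by blast
  obtain c' where "addition_chain c'" "last c' = 2 ^ n - 1" "chain_length c' = chain_length c + 2"
    using mersenne_chain_double_add_one[OF c(1,2), folded j] .
  from iota_le_chain_length[OF this(1,2)] this(3) c(3)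
  have "iota (2 ^ n - 1) \<le> 3 * j + 4" by simp
  with j show ?thesis by simp
qed

lemma div_powr_floor_log2_lt_2:
  assumes "x > 0"
  shows "x / 2 powr \<lfloor>log 2 x\<rfloor> < 2"
proof -
  have "x < 2 powr (\<lfloor>log 2 x\<rfloor> + 1)"
    using floor_log_eq_powr_iff[OF assms, of 2 "\<lfloor>log 2 x\<rfloor>"] by simp
  then show ?thesis by (simp add: powr_add divide_less_eq mult.commute)
qed

theorem mainTheorem13:
  fixes n :: nat
  assumes "n \<ge> 2"
  shows "real (iota (2 ^ n - 1)) \<le>
           3 / 2 * real n
         - real_of_int \<lfloor>(real n - 2) / 2 powr (real_of_int \<lfloor>ln (real n) / ln 2 - 1\<rfloor> + 1)\<rfloor>
         - real_of_int \<lfloor>ln (real n) / ln 2 - 1\<rfloor>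
         + 1 / 4 * (1 - (-1) ^ n)
         + real (iota n)"
proof -
  define k where "k = \<lfloor>log 2 (real n)\<rfloor>"
  have floor_log: "\<lfloor>ln (real n) / ln 2 - 1\<rfloor> = k - 1"
    by (simp add: k_def log_def)
  have "(real n - 2) / 2 powr k \<le> real n / 2 powr k"
    by (simp add: divide_right_mono)
  also have "\<dots> < 2"
    using div_powr_floor_log2_lt_2[of "real n"] assms by (simp add: k_def)
  finally have "(real n - 2) / 2 powr k < 2" .
  then have quotient: "\<lfloor>(real n - 2) / 2 powr (real_of_int (k - 1) + 1)\<rfloor> \<le> 1"
    by simp
  have "k \<le> int (iota n)"
    using floor_log2_le_iota assms k_def by simp
  moreover have "1 / 4 * (1 - (-1) ^ n) = real (n mod 2) / 2"
    by (cases "even n") (simp_all add: odd_iff_mod_2_eq_one)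
  moreover have "2 * real (iota (2 ^ n - 1)) \<le> 3 * real n - 2 + real (n mod 2)"
    using iota_mersenne_le[OF assms] assms by linarith
  ultimately show ?thesis
    unfolding floor_log using quotient by linarith
qed

end
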